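(* Let $\mathbf x_1,\dots,\mathbf x_n\in\mathbb R^d$ with $\|\mathbf x_i\|_2=1$ be such that $\mathbf H^\infty$ is positive definite. Suppose $y_i=\alpha(\boldsymbol\beta^\top\mathbf x_i)^p$ for all $i\in[n]$, where $\alpha\in\mathbb R$, $\boldsymbol\beta\in\mathbb R^d$, and $p=1$ or $p=2l$ for some positive integer $l$. Then $$\sqrt{\mathbf y^\top(\mathbf H^\infty)^{-1}\mathbf y}\le3p|\alpha|\,\|\boldsymbol\beta\|_2^p.$$
   Context: $\mathbf y=(y_1,\dots,y_n)^\top$. $\mathbf H^\infty\in\mathbb R^{n\times n}$ is given by $\mathbf H^\infty_{ij}=\mathbb E_{\mathbf w\sim\mathcal N(\mathbf 0,\mathbf I)}[\mathbf x_i^\top\mathbf x_j\mathbb I\{\mathbf w^\top\mathbf x_i\ge0,\mathbf w^\top\mathbf x_j\ge0\}]=\frac{\mathbf x_i^\top\mathbf x_j(\pi-\arccos(\mathbf x_i^\top\mathbf x_j))}{2\pi}$. *)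

theory Defs
  imports "HOL-Analysis.Analysis"
begin

definition H_inf :: "('n::finite \<Rightarrow> real^'d) \<Rightarrow> real^'n^'n" where
  "H_inf x = (\<chi> i j. (x i \<bullet> x j) * (pi - arccos (x i \<bullet> x j)) / (2 * pi))"

definition pos_def_mat :: "real^'n^'n \<Rightarrow> bool" where
  "pos_def_mat A \<longleftrightarrow> (\<forall>v. v \<noteq> 0 \<longrightarrow> v \<bullet> (A *v v) > 0)"

end

theory Submission
  imports Defs
begin

text \<open>Since arccos t = pi/2 - arcsin t, the quadratic form of H is u'Hu = u'Gu/4 + u'Ku/(2 pi),
  where G is the Gram matrix of the data and K_ij = t_ij arcsin t_ij with t_ij = x_i . x_j. The
  Taylor coefficients c_k of arcsin are positive with c_k >= 1/(2k+1)^2, so K = sum_k c_k G^(2k+2) is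
  a sum of Hadamard powers of G, each positive semidefinite by Schur's product theorem. Hence u'Hu
  dominates both u'Gu/4 and u'G^(2m+2)u/(2 pi (2m+1)^2). On the other side, Cauchy-Schwarz in the
  p-fold tensor power gives (u'y)^2 <= alpha^2 |beta|^(2p) u'G^(p)u. So (u'y)^2 <= C^2 u'Hu for all
  u with C = 3p |alpha| |beta|^p, and u = H^-1 y yields y'H^-1 y <= C^2.\<close>

definition inv_sqrt_coeff :: "nat \<Rightarrow> real" where
  "inv_sqrt_coeff k = (-1) ^ k * ((-1/2) gchoose k)"

definition arcsin_coeff :: "nat \<Rightarrow> real" where
  "arcsin_coeff k = inv_sqrt_coeff k / (2 * real k + 1)"

lemma inv_sqrt_coeff_Suc:
  "inv_sqrt_coeff (Suc k) = inv_sqrt_coeff k * (2 * real k + 1) / (2 * real k + 2)"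
proof -
  have "(2 * real k + 2) * ((-1/2) gchoose Suc k) = - (2 * real k + 1) * ((-1/2) gchoose k)"
    using gbinomial_mult_1[of "-1/2 :: real" k] by (simp add: algebra_simps)
  then have "(-1/2) gchoose Suc k = - ((-1/2) gchoose k) * (2 * real k + 1) / (2 * real k + 2)"
    by (simp add: field_simps)
  then show ?thesis
    unfolding inv_sqrt_coeff_def power_Suc by simp
qed

lemma inv_sqrt_coeff_ge: "1 / (2 * real k + 1) \<le> inv_sqrt_coeff k"
proof (induction k)
  case 0
  then show ?case by (simp add: inv_sqrt_coeff_def)
next
  case (Suc k)
  have "1 / (2 * real (Suc k) + 1) \<le> (1 / (2 * real k + 1)) * (2 * real k + 1) / (2 * real k + 2)"
    by (simp add: field_simps)
  also have "\<dots> \<le> inv_sqrt_coeff k * (2 * real k + 1) / (2 * real k + 2)"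
    using Suc.IH by (intro divide_right_mono mult_right_mono) auto
  finally show ?case by (simp add: inv_sqrt_coeff_Suc)
qed

lemma arcsin_coeff_ge: "1 / (2 * real k + 1)\<^sup>2 \<le> arcsin_coeff k"
  using divide_right_mono[OF inv_sqrt_coeff_ge[of k], of "2 * real k + 1"]
  by (simp add: arcsin_coeff_def power2_eq_square)

lemma arcsin_coeff_pos: "0 < arcsin_coeff k"
  by (rule less_le_trans[OF _ arcsin_coeff_ge]) (simp add: add_pos_nonneg)

lemma inv_sqrt_series:
  assumes "\<bar>t\<bar> < 1"
  shows "(\<lambda>k. inv_sqrt_coeff k * t ^ (2 * k)) sums inverse (sqrt (1 - t\<^sup>2))"
proof -
  have "\<bar>- t\<^sup>2\<bar> < 1" using assms by (simp add: abs_square_less_1)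
  then have "(\<lambda>k. ((-1/2) gchoose k) * (- t\<^sup>2) ^ k) sums (1 + - t\<^sup>2) powr (-1/2)"
    by (rule gen_binomial_real)
  moreover have "((-1/2) gchoose k) * (- t\<^sup>2) ^ k = inv_sqrt_coeff k * t ^ (2 * k)" for k
  proof -
    have "(- t\<^sup>2) ^ k = (-1) ^ k * t ^ (2 * k)"
      by (subst power_minus) (simp only: power_mult)
    then show ?thesis
      unfolding inv_sqrt_coeff_def by (simp only: mult_ac)
  qed
  moreover have "(1 + - t\<^sup>2) powr (-1/2) = inverse (sqrt (1 - t\<^sup>2))"
    using \<open>\<bar>- t\<^sup>2\<bar> < 1\<close> by (simp add: powr_minus powr_half_sqrt)
  ultimately show ?thesis by simp
qed

lemma sums_spread_even_iff:
  "f sums s \<longleftrightarrow> (\<lambda>n. if even n then f (n div 2) else 0) sums (s :: real)"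
proof
  assume "f sums s"
  from sums_if[OF sums_zero this] show "(\<lambda>n. if even n then f (n div 2) else 0) sums s"
    by (simp only: add_0_left)
next
  assume "(\<lambda>n. if even n then f (n div 2) else 0) sums s"
  from LIMSEQ_linear[OF this[unfolded sums_def] pos2,
      simplified sum_split_even_odd[simplified mult.commute]]
  show "f sums s" unfolding sums_def by simp
qed

text \<open>The coefficient of t^(n+1) in the Taylor series of arcsin.\<close>
definition arcsin_taylor_coeff :: "nat \<Rightarrow> real" where
  "arcsin_taylor_coeff n = (if even n then arcsin_coeff (n div 2) else 0)"

lemma arcsin_taylor_derivative_sums:
  assumes "\<bar>s\<bar> < 1"
  shows "(\<lambda>n. arcsin_taylor_coeff n * real (Suc n) * s ^ n) sums inverse (sqrt (1 - s\<^sup>2))"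
proof -
  have spread: "arcsin_taylor_coeff n * real (Suc n) * s ^ n
      = (if even n then inv_sqrt_coeff (n div 2) * s ^ (2 * (n div 2)) else 0)" for n
  proof (cases "even n")
    case True
    then obtain k where "n = 2 * k" by blast
    moreover have "2 * real k + 1 \<noteq> 0" by linarith
    ultimately show ?thesis
      by (simp add: arcsin_taylor_coeff_def arcsin_coeff_def field_simps)
  qed (simp add: arcsin_taylor_coeff_def)
  show ?thesis
    unfolding spread
    using sums_spread_even_iff[THEN iffD1, OF inv_sqrt_series[OF assms]] by simp
qed

lemma arcsin_taylor_sums:
  assumes "\<bar>t\<bar> < 1"
  shows "(\<lambda>n. arcsin_taylor_coeff n * t ^ Suc n) sums arcsin t"
proof -
  have summable: "summable (\<lambda>n. arcsin_taylor_coeff n * s ^ Suc n)" if "\<bar>s\<bar> < 1" for s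
  proof (rule summable_comparison_test'[where N = 0])
    show "summable (\<lambda>n. arcsin_taylor_coeff n * real (Suc n) * \<bar>s\<bar> ^ n)"
      using arcsin_taylor_derivative_sums[of "\<bar>s\<bar>"] that by (simp add: sums_iff)
    have "0 \<le> arcsin_taylor_coeff n" for n
      using arcsin_coeff_pos by (simp add: arcsin_taylor_coeff_def less_imp_le)
    moreover have "\<bar>s\<bar> \<le> real (Suc n)" for n
      using that by simp
    ultimately show "norm (arcsin_taylor_coeff n * s ^ Suc n)
        \<le> arcsin_taylor_coeff n * real (Suc n) * \<bar>s\<bar> ^ n" for n
      by (simp add: abs_mult power_abs mult.assoc mult_left_mono mult_right_mono)
  qed
  define S where "S s = (\<Sum>n. arcsin_taylor_coeff n * s ^ Suc n)" for s
  have derivative: "DERIV S s :> inverse (sqrt (1 - s\<^sup>2))" if "s \<in> {-1<..<1}" for s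
  proof -
    have "DERIV S s :> (\<Sum>n. arcsin_taylor_coeff n * real (Suc n) * s ^ n)"
      unfolding S_def
      by (rule DERIV_power_series'[where R = 1])
        (use that sums_summable[OF arcsin_taylor_derivative_sums] in auto)
    then show ?thesis
      using that sums_unique[OF arcsin_taylor_derivative_sums, of s] by auto
  qed
  have "DERIV (\<lambda>s. S s - arcsin s) s :> 0" if "s \<in> {-1<..<1}" for s
    using DERIV_diff[OF derivative[OF that] DERIV_arcsin[of s]] that by simp
  from DERIV_isconst3[of "-1" 1 t 0, OF _ _ _ this]
  have "S t - arcsin t = S 0 - arcsin 0"
    using assms by (auto simp: abs_less_iff)
  then have "S t = arcsin t"
    by (simp add: S_def)
  then show ?thesis
    using summable_sums[OF summable[OF assms]] by (simp add: S_def)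
qed

lemma arcsin_series:
  assumes "\<bar>t\<bar> < 1"
  shows "(\<lambda>k. arcsin_coeff k * t ^ (2 * k + 1)) sums arcsin t"
proof -
  have "(\<lambda>n. if even n then arcsin_coeff (n div 2) * t ^ (2 * (n div 2) + 1) else 0)
      = (\<lambda>n. arcsin_taylor_coeff n * t ^ Suc n)"
    by (auto simp: arcsin_taylor_coeff_def fun_eq_iff)
  then show ?thesis
    using arcsin_taylor_sums[OF assms]
      sums_spread_even_iff[of "\<lambda>k. arcsin_coeff k * t ^ (2 * k + 1)"] by simp
qed

definition kernel_form :: "(real \<Rightarrow> real) \<Rightarrow> ('n::finite \<Rightarrow> 'a::real_inner) \<Rightarrow> ('n \<Rightarrow> real) \<Rightarrow> real"
  where "kernel_form f x u = (\<Sum>i\<in>UNIV. \<Sum>j\<in>UNIV. u i * u j * f (x i \<bullet> x j))"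

lemma kernel_form_power_Suc:
  fixes x :: "'n::finite \<Rightarrow> 'a::euclidean_space"
  shows "kernel_form (\<lambda>t. t ^ Suc m) x u
    = (\<Sum>b\<in>Basis. kernel_form (\<lambda>t. t ^ m) x (\<lambda>i. u i * (x i \<bullet> b)))"
proof -
  have "u i * u j * (x i \<bullet> x j) ^ Suc m
      = (\<Sum>b\<in>Basis. u i * (x i \<bullet> b) * (u j * (x j \<bullet> b)) * (x i \<bullet> x j) ^ m)" for i j
  proof -
    have "(x i \<bullet> x j) ^ Suc m = (\<Sum>b\<in>Basis. (x i \<bullet> b) * (x j \<bullet> b)) * (x i \<bullet> x j) ^ m"
      by (simp only: power_Suc euclidean_inner[of "x i" "x j", symmetric])
    then show ?thesis
      by (simp add: sum_distrib_left sum_distrib_right mult_ac)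
  qed
  then have "kernel_form (\<lambda>t. t ^ Suc m) x u
      = (\<Sum>i\<in>UNIV. \<Sum>j\<in>UNIV. \<Sum>b\<in>Basis. u i * (x i \<bullet> b) * (u j * (x j \<bullet> b)) * (x i \<bullet> x j) ^ m)"
    by (simp add: kernel_form_def)
  also have "\<dots> = (\<Sum>i\<in>UNIV. \<Sum>b\<in>Basis. \<Sum>j\<in>UNIV. u i * (x i \<bullet> b) * (u j * (x j \<bullet> b)) * (x i \<bullet> x j) ^ m)"
    by (intro sum.cong refl sum.swap)
  also have "\<dots> = (\<Sum>b\<in>Basis. \<Sum>i\<in>UNIV. \<Sum>j\<in>UNIV. u i * (x i \<bullet> b) * (u j * (x j \<bullet> b)) * (x i \<bullet> x j) ^ m)"
    by (rule sum.swap)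
  finally show ?thesis
    by (simp add: kernel_form_def)
qed

lemma kernel_form_power_nonneg:
  fixes x :: "'n::finite \<Rightarrow> 'a::euclidean_space"
  shows "0 \<le> kernel_form (\<lambda>t. t ^ m) x u"
proof (induction m arbitrary: u)
  case 0
  have "kernel_form (\<lambda>t. t ^ 0) x u = (\<Sum>i\<in>UNIV. u i)\<^sup>2"
    by (simp add: kernel_form_def power2_eq_square sum_product)
  then show ?case by simp
next
  case (Suc m)
  then show ?case
    unfolding kernel_form_power_Suc by (simp add: sum_nonneg)
qed

lemma power_sum_sq_le_kernel_form:
  fixes x :: "'n::finite \<Rightarrow> 'a::euclidean_space"
  shows "(\<Sum>i\<in>UNIV. u i * (\<beta> \<bullet> x i) ^ m)\<^sup>2 \<le> (\<beta> \<bullet> \<beta>) ^ m * kernel_form (\<lambda>t. t ^ m) x u"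
proof (induction m arbitrary: u)
  case 0
  show ?case
    by (simp add: kernel_form_def power2_eq_square sum_product)
next
  case (Suc m)
  define s where "s b = (\<Sum>i\<in>UNIV. u i * (x i \<bullet> b) * (\<beta> \<bullet> x i) ^ m)" for b
  have "u i * (\<beta> \<bullet> x i) ^ Suc m = (\<Sum>b\<in>Basis. (\<beta> \<bullet> b) * (u i * (x i \<bullet> b) * (\<beta> \<bullet> x i) ^ m))" for i
  proof -
    have "(\<beta> \<bullet> x i) ^ Suc m = (\<Sum>b\<in>Basis. (\<beta> \<bullet> b) * (x i \<bullet> b)) * (\<beta> \<bullet> x i) ^ m"
      by (simp only: power_Suc euclidean_inner[of \<beta> "x i", symmetric])
    then show ?thesis
      by (simp add: sum_distrib_left sum_distrib_right mult_ac)
  qed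
  then have "(\<Sum>i\<in>UNIV. u i * (\<beta> \<bullet> x i) ^ Suc m) = (\<Sum>b\<in>Basis. (\<beta> \<bullet> b) * s b)"
    by (simp add: s_def sum_distrib_left sum.swap[of _ UNIV Basis])
  then have "(\<Sum>i\<in>UNIV. u i * (\<beta> \<bullet> x i) ^ Suc m)\<^sup>2
      \<le> (\<Sum>b\<in>Basis. (\<beta> \<bullet> b)\<^sup>2) * (\<Sum>b\<in>Basis. (s b)\<^sup>2)"
    by (simp only: Cauchy_Schwarz_ineq_sum)
  also have "\<dots> \<le> (\<beta> \<bullet> \<beta>) * (\<Sum>b\<in>Basis. (\<beta> \<bullet> \<beta>) ^ m * kernel_form (\<lambda>t. t ^ m) x (\<lambda>i. u i * (x i \<bullet> b)))"
  proof -
    have "(\<Sum>b\<in>Basis. (\<beta> \<bullet> b)\<^sup>2) = \<beta> \<bullet> \<beta>"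
      by (simp add: euclidean_inner[of \<beta> \<beta>] power2_eq_square)
    moreover have "(s b)\<^sup>2 \<le> (\<beta> \<bullet> \<beta>) ^ m * kernel_form (\<lambda>t. t ^ m) x (\<lambda>i. u i * (x i \<bullet> b))" for b
      using Suc.IH[of "\<lambda>i. u i * (x i \<bullet> b)"] by (simp add: s_def mult_ac)
    ultimately show ?thesis
      by (simp add: mult_left_mono sum_mono)
  qed
  also have "\<dots> = (\<beta> \<bullet> \<beta>) ^ Suc m * kernel_form (\<lambda>t. t ^ Suc m) x u"
    unfolding kernel_form_power_Suc by (simp add: sum_distrib_left mult_ac)
  finally show ?case .
qed

lemma abs_inner_le_1:
  fixes a b :: "'a::real_inner"
  assumes "norm a \<le> 1" "norm b \<le> 1"
  shows "\<bar>a \<bullet> b\<bar> \<le> 1"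
  using Cauchy_Schwarz_ineq2[of a b] mult_le_one[OF assms(1) norm_ge_zero assms(2)] by linarith

lemma kernel_form_arcsin_series:
  fixes x :: "'n::finite \<Rightarrow> 'a::real_inner"
  assumes "\<And>i j. \<bar>x i \<bullet> x j\<bar> < 1"
  shows "(\<lambda>k. arcsin_coeff k * kernel_form (\<lambda>t. t ^ (2 * k + 2)) x u)
    sums kernel_form (\<lambda>t. t * arcsin t) x u"
proof -
  have series_term: "arcsin_coeff k * kernel_form (\<lambda>t. t ^ (2 * k + 2)) x u
      = (\<Sum>i\<in>UNIV. \<Sum>j\<in>UNIV. u i * u j * (x i \<bullet> x j) * (arcsin_coeff k * (x i \<bullet> x j) ^ (2 * k + 1)))"
    for k by (simp add: kernel_form_def sum_distrib_left mult_ac)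
  have series_limit: "kernel_form (\<lambda>t. t * arcsin t) x u
      = (\<Sum>i\<in>UNIV. \<Sum>j\<in>UNIV. u i * u j * (x i \<bullet> x j) * arcsin (x i \<bullet> x j))"
    by (simp add: kernel_form_def mult.assoc)
  show ?thesis
    unfolding series_term series_limit by (intro sums_sum sums_mult arcsin_series assms)
qed

lemma arcsin_coeff_kernel_form_le_strict:
  fixes x :: "'n::finite \<Rightarrow> 'a::euclidean_space"
  assumes "\<And>i j. \<bar>x i \<bullet> x j\<bar> < 1"
  shows "arcsin_coeff m * kernel_form (\<lambda>t. t ^ (2 * m + 2)) x u
    \<le> kernel_form (\<lambda>t. t * arcsin t) x u"
proof -
  note series = kernel_form_arcsin_series[of x, OF assms]
  have "0 \<le> arcsin_coeff k * kernel_form (\<lambda>t. t ^ (2 * k + 2)) x u" for k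
    by (intro mult_nonneg_nonneg less_imp_le[OF arcsin_coeff_pos] kernel_form_power_nonneg)
  then have "(\<Sum>k\<in>{m}. arcsin_coeff k * kernel_form (\<lambda>t. t ^ (2 * k + 2)) x u)
      \<le> (\<Sum>k. arcsin_coeff k * kernel_form (\<lambda>t. t ^ (2 * k + 2)) x u)"
    by (intro sum_le_suminf sums_summable[OF series]) simp_all
  then show ?thesis
    using series by (simp add: sums_iff)
qed

lemma arcsin_coeff_kernel_form_le:
  fixes x :: "'n::finite \<Rightarrow> 'a::euclidean_space"
  assumes "\<And>i. norm (x i) \<le> 1"
  shows "arcsin_coeff m * kernel_form (\<lambda>t. t ^ (2 * m + 2)) x u
    \<le> kernel_form (\<lambda>t. t * arcsin t) x u"
proof -
  have bound: "\<bar>r * (r * (x i \<bullet> x j))\<bar> \<le> r * r" if "0 \<le> r" for r i j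
  proof -
    have "r * r * \<bar>x i \<bullet> x j\<bar> \<le> r * r"
      using abs_inner_le_1[OF assms assms, of i j] that by (intro mult_left_le) simp_all
    then show ?thesis
      using that by (simp add: abs_mult mult.assoc)
  qed
  \<comment> \<open>The arcsin series is only available for |t| < 1: prove the inequality for the
    contracted points r x_i, 0 < r < 1, and let r tend to 1.\<close>
  define h where "h r = kernel_form (\<lambda>t. t * arcsin t) (\<lambda>i. r *\<^sub>R x i) u
    - arcsin_coeff m * kernel_form (\<lambda>t. t ^ (2 * m + 2)) (\<lambda>i. r *\<^sub>R x i) u" for r
  have "0 \<le> h r" if "r \<in> {0<..<1}" for r
  proof -
    have "r * r < 1 * 1"
      using that by (intro mult_strict_mono) auto
    then have "\<bar>(r *\<^sub>R x i) \<bullet> (r *\<^sub>R x j)\<bar> < 1" for i j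
      using bound[of r i j] that by simp
    then show ?thesis
      using arcsin_coeff_kernel_form_le_strict[of "\<lambda>i. r *\<^sub>R x i"] by (simp add: h_def)
  qed
  moreover have "continuous_on {0..1} h"
  proof -
    have "\<forall>r\<in>{0..1}. -1 \<le> r * (r * (x i \<bullet> x j)) \<and> r * (r * (x i \<bullet> x j)) \<le> 1" for i j
    proof
      fix r :: real assume "r \<in> {0..1}"
      then have "r * r \<le> 1 * 1"
        by (intro mult_mono) auto
      then show "-1 \<le> r * (r * (x i \<bullet> x j)) \<and> r * (r * (x i \<bullet> x j)) \<le> 1"
        using bound[of r i j] \<open>r \<in> {0..1}\<close> by (simp add: abs_le_iff)
    qed
    then show ?thesis
      unfolding h_def kernel_form_def inner_scaleR_left inner_scaleR_right
      by (intro continuous_intros)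
  qed
  ultimately have "0 \<le> h 1"
    by (intro continuous_ge_on_closure[of "{0<..<1}" h 1 0]) auto
  then show ?thesis
    by (simp add: h_def)
qed

lemma kernel_form_arcsin_nonneg:
  fixes x :: "'n::finite \<Rightarrow> 'a::euclidean_space"
  assumes "\<And>i. norm (x i) \<le> 1"
  shows "0 \<le> kernel_form (\<lambda>t. t * arcsin t) x u"
proof -
  have "0 \<le> arcsin_coeff 0 * kernel_form (\<lambda>t. t ^ (2 * 0 + 2)) x u"
    by (intro mult_nonneg_nonneg less_imp_le[OF arcsin_coeff_pos] kernel_form_power_nonneg)
  also have "\<dots> \<le> kernel_form (\<lambda>t. t * arcsin t) x u"
    by (rule arcsin_coeff_kernel_form_le[of x, OF assms])
  finally show ?thesis .
qed

lemma inner_matrix_vector_mult_eq: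
  "(u :: real^'n::finite) \<bullet> (M *v u) = (\<Sum>i\<in>UNIV. \<Sum>j\<in>UNIV. u $ i * u $ j * M $ i $ j)"
  by (simp add: inner_vec_def matrix_vector_mult_def sum_distrib_left mult_ac)

lemma H_inf_quadratic_form:
  fixes x :: "'n::finite \<Rightarrow> real^'d"
  assumes "\<And>i. norm (x i) \<le> 1"
  shows "u \<bullet> (H_inf x *v u)
    = kernel_form (\<lambda>t. t) x (($) u) / 4 + kernel_form (\<lambda>t. t * arcsin t) x (($) u) / (2 * pi)"
proof -
  have "H_inf x $ i $ j = (x i \<bullet> x j) / 4 + (x i \<bullet> x j) * arcsin (x i \<bullet> x j) / (2 * pi)" for i j
    using abs_inner_le_1[OF assms assms, of i j]
    by (simp add: H_inf_def arccos_arcsin_eq abs_le_iff field_simps)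
  then show ?thesis
    by (simp add: inner_matrix_vector_mult_eq kernel_form_def sum_divide_distrib
        sum.distrib distrib_left mult.assoc)
qed

lemma kernel_form_arcsin_le_H_inf:
  fixes x :: "'n::finite \<Rightarrow> real^'d"
  assumes "\<And>i. norm (x i) \<le> 1"
  shows "kernel_form (\<lambda>t. t * arcsin t) x (($) u) \<le> 2 * pi * (u \<bullet> (H_inf x *v u))"
proof -
  have "0 \<le> kernel_form (\<lambda>t. t) x (($) u) / 4"
    using kernel_form_power_nonneg[of 1 x "($) u"] by simp
  then have "kernel_form (\<lambda>t. t * arcsin t) x (($) u) / (2 * pi) \<le> u \<bullet> (H_inf x *v u)"
    using H_inf_quadratic_form[of x u, OF assms] by linarith
  then show ?thesis
    by (simp add: pos_divide_le_eq mult.commute)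
qed

lemma kernel_form_linear_le_H_inf:
  fixes x :: "'n::finite \<Rightarrow> real^'d"
  assumes "\<And>i. norm (x i) \<le> 1"
  shows "kernel_form (\<lambda>t. t) x (($) u) \<le> 4 * (u \<bullet> (H_inf x *v u))"
proof -
  have "0 \<le> kernel_form (\<lambda>t. t * arcsin t) x (($) u) / (2 * pi)"
    using kernel_form_arcsin_nonneg[of x "($) u", OF assms] by simp
  then show ?thesis
    using H_inf_quadratic_form[of x u, OF assms] by linarith
qed

lemma kernel_form_even_power_le_H_inf:
  fixes x :: "'n::finite \<Rightarrow> real^'d"
  assumes "\<And>i. norm (x i) \<le> 1"
  shows "kernel_form (\<lambda>t. t ^ (2 * m + 2)) x (($) u)
    \<le> 2 * pi * (2 * real m + 1)\<^sup>2 * (u \<bullet> (H_inf x *v u))"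
proof -
  have "1 \<le> (2 * real m + 1)\<^sup>2 * arcsin_coeff m"
    using arcsin_coeff_ge[of m] by (simp add: field_simps)
  then have "1 * kernel_form (\<lambda>t. t ^ (2 * m + 2)) x (($) u)
      \<le> (2 * real m + 1)\<^sup>2 * arcsin_coeff m * kernel_form (\<lambda>t. t ^ (2 * m + 2)) x (($) u)"
    by (rule mult_right_mono) (rule kernel_form_power_nonneg)
  then have "kernel_form (\<lambda>t. t ^ (2 * m + 2)) x (($) u)
      \<le> (2 * real m + 1)\<^sup>2 * (arcsin_coeff m * kernel_form (\<lambda>t. t ^ (2 * m + 2)) x (($) u))"
    by (simp only: mult_1 mult.assoc)
  also have "\<dots> \<le> (2 * real m + 1)\<^sup>2 * kernel_form (\<lambda>t. t * arcsin t) x (($) u)"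
    using arcsin_coeff_kernel_form_le[of x, OF assms] by (intro mult_left_mono) simp_all
  also have "\<dots> \<le> (2 * real m + 1)\<^sup>2 * (2 * pi * (u \<bullet> (H_inf x *v u)))"
    using kernel_form_arcsin_le_H_inf[of x u, OF assms] by (intro mult_left_mono) simp_all
  finally show ?thesis
    by (simp add: mult_ac)
qed

lemma kernel_form_power_le_H_inf:
  fixes x :: "'n::finite \<Rightarrow> real^'d"
  assumes unit: "\<And>i. norm (x i) \<le> 1"
    and p: "p = 1 \<or> (\<exists>l::nat. l > 0 \<and> p = 2 * l)"
  shows "kernel_form (\<lambda>t. t ^ p) x (($) u) \<le> 9 * (real p)\<^sup>2 * (u \<bullet> (H_inf x *v u))"
proof -
  have "0 \<le> u \<bullet> (H_inf x *v u)"
    using kernel_form_linear_le_H_inf[of x u, OF unit] kernel_form_power_nonneg[of 1 x "($) u"]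
    by simp
  show ?thesis
  proof (cases "p = 1")
    case True
    then show ?thesis
      using kernel_form_linear_le_H_inf[of x u, OF unit] \<open>0 \<le> u \<bullet> (H_inf x *v u)\<close> by simp
  next
    case False
    with p obtain l where "0 < l" "p = 2 * l"
      by blast
    then obtain m where m: "p = 2 * m + 2"
      by (intro that[of "l - 1"]) simp
    have "2 * pi * (2 * real m + 1)\<^sup>2 \<le> 8 * (2 * real m + 1)\<^sup>2"
      using pi_less_4 by (intro mult_right_mono) auto
    also have "\<dots> \<le> 9 * (real p)\<^sup>2"
      by (simp add: m power2_eq_square algebra_simps)
    finally show ?thesis
      using kernel_form_even_power_le_H_inf[of x m u, OF unit] \<open>0 \<le> u \<bullet> (H_inf x *v u)\<close>
      by (simp add: m) (meson mult_right_mono order_trans)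
  qed
qed

lemma pos_def_mat_invertible:
  assumes "pos_def_mat H"
  shows "invertible H"
proof -
  have "H *v v = 0 \<Longrightarrow> v = 0" for v
    using assms unfolding pos_def_mat_def by force
  then have "\<exists>B. B ** H = mat 1"
    by (simp add: matrix_left_invertible_ker)
  then show ?thesis
    using invertible_left_inverse by blast
qed

lemma sqrt_inner_matrix_inv_le:
  fixes H :: "real^'n::finite^'n"
  assumes pd: "pos_def_mat H" and "0 \<le> C"
    and bound: "\<And>u. (u \<bullet> y)\<^sup>2 \<le> C\<^sup>2 * (u \<bullet> (H *v u))"
  shows "sqrt (y \<bullet> (matrix_inv H *v y)) \<le> C"
proof -
  define z where "z = matrix_inv H *v y"
  have "H ** matrix_inv H = mat 1 \<and> matrix_inv H ** H = mat 1"
    using pos_def_mat_invertible[OF pd] unfolding invertible_def matrix_inv_def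
    by (rule someI_ex)
  then have "H *v z = y"
    by (simp add: z_def matrix_vector_mul_assoc)
  then have q: "y \<bullet> z = z \<bullet> (H *v z)"
    by (simp add: inner_commute)
  have "0 \<le> y \<bullet> z"
    using pd unfolding q pos_def_mat_def by (cases "z = 0") (auto intro: less_imp_le)
  moreover have "(y \<bullet> z)\<^sup>2 \<le> C\<^sup>2 * (y \<bullet> z)"
    using bound[of z] by (simp add: q inner_commute)
  ultimately have "y \<bullet> z \<le> C\<^sup>2"
    by (cases "y \<bullet> z = 0") (auto simp: power2_eq_square)
  then show ?thesis
    using \<open>0 \<le> C\<close> real_sqrt_le_mono[of "y \<bullet> z" "C\<^sup>2"] by (simp add: z_def)
qed

theorem theorem6p1:
  fixes x :: "'n::finite \<Rightarrow> real^'d"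
    and y :: "real^'n"
    and \<alpha> :: real and \<beta> :: "real^'d" and p :: nat
  assumes unit: "\<And>i. norm (x i) = 1"
    and pd: "pos_def_mat (H_inf x)"
    and p: "p = 1 \<or> (\<exists>l::nat. l > 0 \<and> p = 2 * l)"
    and y: "\<And>i. y $ i = \<alpha> * (\<beta> \<bullet> x i) ^ p"
  shows "sqrt (y \<bullet> (matrix_inv (H_inf x) *v y)) \<le> 3 * real p * \<bar>\<alpha>\<bar> * norm \<beta> ^ p"
proof (rule sqrt_inner_matrix_inv_le[OF pd])
  fix u :: "real^'n"
  have "u \<bullet> y = \<alpha> * (\<Sum>i\<in>UNIV. u $ i * (\<beta> \<bullet> x i) ^ p)"
    unfolding inner_vec_def[of u y] by (simp add: y sum_distrib_left mult_ac)
  then have "(u \<bullet> y)\<^sup>2 = \<alpha>\<^sup>2 * (\<Sum>i\<in>UNIV. u $ i * (\<beta> \<bullet> x i) ^ p)\<^sup>2"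
    by (simp add: power_mult_distrib)
  also have "\<dots> \<le> \<alpha>\<^sup>2 * ((\<beta> \<bullet> \<beta>) ^ p * kernel_form (\<lambda>t. t ^ p) x (($) u))"
    by (intro mult_left_mono power_sum_sq_le_kernel_form) simp
  also have "\<dots> \<le> \<alpha>\<^sup>2 * ((\<beta> \<bullet> \<beta>) ^ p * (9 * (real p)\<^sup>2 * (u \<bullet> (H_inf x *v u))))"
    using kernel_form_power_le_H_inf[of x p u] unit p by (intro mult_left_mono) simp_all
  also have "\<dots> = (3 * real p * \<bar>\<alpha>\<bar> * norm \<beta> ^ p)\<^sup>2 * (u \<bullet> (H_inf x *v u))"
    by (simp add: power2_norm_eq_inner[symmetric] power_mult_distrib power2_abs
        flip: power_mult mult.commute[of 2 p])
  finally show "(u \<bullet> y)\<^sup>2 \<le> (3 * real p * \<bar>\<alpha>\<bar> * norm \<beta> ^ p)\<^sup>2 * (u \<bullet> (H_inf x *v u))" .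
qed simp

end
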